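(* Let $G$ be a finite group and $H$ a proper subgroup with $[G:H]\geq 3$. Let $M$ be a simple rank $3$ $G$-invariant matroid whose ground $G$-set is $G/H$. Define a relation on $G/H - \{\bar{1}\}$ by $\bar{a} \sim \bar{b}$ if $\bar{a} = \bar{b}$ or $\{\bar{1},\bar{a},\bar{b}\}$ is dependent. Then: (1) $\sim$ is a nontrivial equivalence relation; (2) if $\bar{a} \sim \bar{b}$ and $\bar{a} \neq \bar{b}$, then $\overline{a^{-1}} \sim \overline{a^{-1}b}$; (3) for any $h \in H$ and $a,b \in G - H$, if $\bar{a} \sim \bar{b}$ then $\overline{ha} \sim \overline{hb}$; (4) the bases of $M$ are precisely the sets $\{\bar{a},\bar{b},\bar{c}\} \subseteq G/H$ with the three elements distinct and $\overline{a^{-1}b} \not\sim \overline{a^{-1}c}$.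
   Context: $G/H$ is the set of left cosets with $G$ acting by left multiplication; $\bar{a} = aH$. A matroid on a $G$-set is $G$-invariant if $gB$ is a basis for every basis $B$ and $g\in G$. A matroid is simple if every circuit has at least three elements. An equivalence relation is nontrivial if it has at least two classes. *)

theory Defs
  imports "HOL-Algebra.Left_Coset"
begin

definition matroid :: "'a set \<Rightarrow> 'a set set \<Rightarrow> bool" where
  "matroid E I \<longleftrightarrow> finite E \<and> {} \<in> I \<and> (\<forall>X\<in>I. X \<subseteq> E)
     \<and> (\<forall>X Y. X \<in> I \<and> Y \<subseteq> X \<longrightarrow> Y \<in> I)
     \<and> (\<forall>X\<in>I. \<forall>Y\<in>I. card X < card Y \<longrightarrow> (\<exists>y\<in>Y - X. insert y X \<in> I))"

definition mbasis :: "'a set \<Rightarrow> 'a set set \<Rightarrow> 'a set \<Rightarrow> bool" where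
  "mbasis E I B \<longleftrightarrow> B \<in> I \<and> (\<forall>X\<in>I. B \<subseteq> X \<longrightarrow> X = B)"

definition mdependent :: "'a set \<Rightarrow> 'a set set \<Rightarrow> 'a set \<Rightarrow> bool" where
  "mdependent E I X \<longleftrightarrow> X \<subseteq> E \<and> X \<notin> I"

definition mcircuit :: "'a set \<Rightarrow> 'a set set \<Rightarrow> 'a set \<Rightarrow> bool" where
  "mcircuit E I C \<longleftrightarrow> mdependent E I C \<and> (\<forall>D. D \<subset> C \<longrightarrow> \<not> mdependent E I D)"

definition mrank_of :: "'a set \<Rightarrow> 'a set set \<Rightarrow> 'a set \<Rightarrow> nat" where
  "mrank_of E I X = Max {card Y | Y. Y \<subseteq> X \<and> Y \<in> I}"

definition mrank :: "'a set \<Rightarrow> 'a set set \<Rightarrow> nat" where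
  "mrank E I = mrank_of E I E"

definition msimple :: "'a set \<Rightarrow> 'a set set \<Rightarrow> bool" where
  "msimple E I \<longleftrightarrow> (\<forall>C. mcircuit E I C \<longrightarrow> card C \<ge> 3)"

text \<open>G acts on G/H by left multiplication: g (aH) = (ga)H, i.e. g <# (aH).
  A matroid on G/H is G-invariant if g B is a basis for every basis B and g in G.\<close>
definition G_invariant_matroid :: "('a, 'b) monoid_scheme \<Rightarrow> 'a set \<Rightarrow> 'a set set set \<Rightarrow> bool" where
  "G_invariant_matroid G H I \<longleftrightarrow>
     (\<forall>B g. mbasis (lcosets\<^bsub>G\<^esub> H) I B \<and> g \<in> carrier G \<longrightarrow>
        mbasis (lcosets\<^bsub>G\<^esub> H) I ((\<lambda>C. g <#\<^bsub>G\<^esub> C) ` B))"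

text \<open>The relation on G/H - {1bar}: x ~ y iff x = y or {1bar, x, y} is dependent
  (1bar = H is the trivial coset).\<close>
definition coset_sim :: "('a, 'b) monoid_scheme \<Rightarrow> 'a set \<Rightarrow> 'a set set set \<Rightarrow> ('a set \<times> 'a set) set" where
  "coset_sim G H I = {(x, y). x \<in> lcosets\<^bsub>G\<^esub> H - {H} \<and> y \<in> lcosets\<^bsub>G\<^esub> H - {H} \<and>
       (x = y \<or> mdependent (lcosets\<^bsub>G\<^esub> H) I {H, x, y})}"

end

theory Submission
  imports Defs
begin

text \<open>Since the matroid is simple, all pairs are independent, so two distinct points of
  G/H other than 1bar are related iff they lie on a common line through 1bar, and these lines
  partition the points (matroid augmentation). Every independent set lies in a basis, so
  G-invariance of the bases makes left translation preserve independence of arbitrary sets.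
  Translating a triple {aH, bH, cH} by a^-1 moves aH to 1bar; this gives (2), (3) (where h
  fixes 1bar) and, as the bases are exactly the independent triples, (4). Translating any
  basis in the same way exhibits two unrelated points, so the relation is nontrivial.\<close>

lemma matroid_finite_ground: "matroid E I \<Longrightarrow> finite E"
  unfolding matroid_def by blast

lemma matroid_empty_indep: "matroid E I \<Longrightarrow> {} \<in> I"
  unfolding matroid_def by blast

lemma matroid_indep_subset_ground: "matroid E I \<Longrightarrow> X \<in> I \<Longrightarrow> X \<subseteq> E"
  unfolding matroid_def by blast

lemma matroid_indep_subset: "matroid E I \<Longrightarrow> X \<in> I \<Longrightarrow> Y \<subseteq> X \<Longrightarrow> Y \<in> I"
  unfolding matroid_def by blast

lemma matroid_augment:
  "matroid E I \<Longrightarrow> X \<in> I \<Longrightarrow> Y \<in> I \<Longrightarrow> card X < card Y \<Longrightarrow> \<exists>y\<in>Y - X. insert y X \<in> I"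
  unfolding matroid_def by blast

lemma mdependent_contains_mcircuit:
  assumes "finite X" "mdependent E I X"
  shows "\<exists>C\<subseteq>X. mcircuit E I C"
  using assms
proof (induction X rule: finite_psubset_induct)
  case (psubset X)
  show ?case
  proof (cases "mcircuit E I X")
    case False
    then obtain D where "D \<subset> X" "mdependent E I D"
      using psubset.prems unfolding mcircuit_def by blast
    then obtain C where "C \<subseteq> D" "mcircuit E I C"
      using psubset.IH by blast
    with \<open>D \<subset> X\<close> show ?thesis by auto
  qed blast
qed

lemma msimple_card_le_2_indep:
  assumes M: "matroid E I" and "msimple E I" and "X \<subseteq> E" and "card X \<le> 2"
  shows "X \<in> I"
proof (rule ccontr)
  assume "X \<notin> I"
  have "finite X"
    using finite_subset[OF \<open>X \<subseteq> E\<close> matroid_finite_ground[OF M]] .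
  moreover have "mdependent E I X"
    using \<open>X \<subseteq> E\<close> \<open>X \<notin> I\<close> unfolding mdependent_def by blast
  ultimately obtain C where "C \<subseteq> X" "mcircuit E I C"
    using mdependent_contains_mcircuit by blast
  have "card C \<le> 2"
    using card_mono[OF \<open>finite X\<close> \<open>C \<subseteq> X\<close>] \<open>card X \<le> 2\<close> by linarith
  moreover have "card C \<ge> 3"
    using \<open>msimple E I\<close> \<open>mcircuit E I C\<close> unfolding msimple_def by blast
  ultimately show False by linarith
qed

lemma msimple_dependent_triple_distinct:
  assumes "matroid E I" "msimple E I" "{x, y, z} \<subseteq> E" "{x, y, z} \<notin> I"
  shows "x \<noteq> y \<and> x \<noteq> z \<and> y \<noteq> z"
proof (rule ccontr)
  assume "\<not> (x \<noteq> y \<and> x \<noteq> z \<and> y \<noteq> z)"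
  then have "card {x, y, z} \<le> 2"
    by (cases "x = y"; cases "x = z"; simp add: card_insert_if)
  with msimple_card_le_2_indep[OF assms(1-3)] assms(4) show False by blast
qed

text \<open>Lines through a point p partition the remaining points of a simple matroid: if
  {p, x, z} were independent, augmenting the independent pair {p, y} from it would make
  {p, y, x} or {p, y, z} independent.\<close>

lemma msimple_dependent_triple_trans:
  assumes M: "matroid E I" and S: "msimple E I" and E: "{p, x, y, z} \<subseteq> E"
    and pxy: "{p, x, y} \<notin> I" and pyz: "{p, y, z} \<notin> I" and "x \<noteq> z"
  shows "{p, x, z} \<notin> I"
proof
  assume pxz: "{p, x, z} \<in> I"
  have "p \<noteq> x" "p \<noteq> y" "p \<noteq> z" "x \<noteq> y" "y \<noteq> z"
    using msimple_dependent_triple_distinct[OF M S] E pxy pyz by blast+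
  have "{p, y} \<in> I"
    using msimple_card_le_2_indep[OF M S] E by (simp add: card_insert_if)
  moreover have "card {p, y} < card {p, x, z}"
    using \<open>p \<noteq> x\<close> \<open>p \<noteq> y\<close> \<open>p \<noteq> z\<close> \<open>x \<noteq> z\<close> by simp
  ultimately obtain w where "w \<in> {x, z}" "insert w {p, y} \<in> I"
    using matroid_augment[OF M _ pxz] by blast
  then show False
    using pxy pyz by (auto simp: insert_commute)
qed

lemma matroid_indep_card_le_mrank:
  assumes M: "matroid E I" and "X \<in> I"
  shows "card X \<le> mrank E I"
proof -
  have "finite {card Y | Y. Y \<subseteq> E \<and> Y \<in> I}"
    using matroid_finite_ground[OF M] by simp
  moreover have "card X \<in> {card Y | Y. Y \<subseteq> E \<and> Y \<in> I}"
    using matroid_indep_subset_ground[OF M \<open>X \<in> I\<close>] \<open>X \<in> I\<close> by blast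
  ultimately show ?thesis
    unfolding mrank_def mrank_of_def by simp
qed

lemma matroid_ex_indep_card_mrank:
  assumes M: "matroid E I"
  shows "\<exists>Y\<in>I. card Y = mrank E I"
proof -
  have "finite {card Y | Y. Y \<subseteq> E \<and> Y \<in> I}"
    using matroid_finite_ground[OF M] by simp
  moreover have "{card Y | Y. Y \<subseteq> E \<and> Y \<in> I} \<noteq> {}"
    using matroid_empty_indep[OF M] by blast
  ultimately have "mrank E I \<in> {card Y | Y. Y \<subseteq> E \<and> Y \<in> I}"
    unfolding mrank_def mrank_of_def by (rule Max_in)
  then obtain Y where "Y \<in> I" "mrank E I = card Y"
    by auto
  then show ?thesis by auto
qed

lemma mbasis_iff_card_mrank:
  assumes M: "matroid E I"
  shows "mbasis E I B \<longleftrightarrow> B \<in> I \<and> card B = mrank E I"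
proof
  assume B: "mbasis E I B"
  then have "B \<in> I" unfolding mbasis_def by blast
  moreover have "\<not> card B < mrank E I"
  proof
    assume "card B < mrank E I"
    moreover obtain Y where "Y \<in> I" "card Y = mrank E I"
      using matroid_ex_indep_card_mrank[OF M] by blast
    ultimately obtain y where "y \<notin> B" "insert y B \<in> I"
      using matroid_augment[OF M \<open>B \<in> I\<close> \<open>Y \<in> I\<close>] by auto
    with B show False unfolding mbasis_def by blast
  qed
  ultimately show "B \<in> I \<and> card B = mrank E I"
    using matroid_indep_card_le_mrank[OF M] by (simp add: le_antisym not_less)
next
  assume B: "B \<in> I \<and> card B = mrank E I"
  have "X = B" if "X \<in> I" "B \<subseteq> X" for X
  proof -
    have "finite X"
      using matroid_indep_subset_ground[OF M \<open>X \<in> I\<close>] matroid_finite_ground[OF M]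
      by (rule finite_subset)
    then show "X = B"
      using card_seteq[OF _ \<open>B \<subseteq> X\<close>] matroid_indep_card_le_mrank[OF M \<open>X \<in> I\<close>] B by simp
  qed
  with B show "mbasis E I B" unfolding mbasis_def by blast
qed

lemma matroid_indep_subset_mbasis:
  assumes M: "matroid E I" and "X \<in> I"
  shows "\<exists>B. mbasis E I B \<and> X \<subseteq> B"
proof -
  have "{Y \<in> I. X \<subseteq> Y} \<subseteq> Pow E"
    using matroid_indep_subset_ground[OF M] by blast
  then have "finite {Y \<in> I. X \<subseteq> Y}"
    by (rule finite_subset) (simp add: matroid_finite_ground[OF M])
  moreover have "X \<in> {Y \<in> I. X \<subseteq> Y}"
    using \<open>X \<in> I\<close> by blast
  ultimately obtain B where "B \<in> {Y \<in> I. X \<subseteq> Y}" "\<forall>Y \<in> {Y \<in> I. X \<subseteq> Y}. B \<subseteq> Y \<longrightarrow> Y = B"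
    by (metis (no_types, lifting) finite_has_maximal2)
  then have "mbasis E I B" "X \<subseteq> B"
    unfolding mbasis_def by auto
  then show ?thesis by blast
qed

context group
begin

lemma lcos_in_lcosets: "a \<in> carrier G \<Longrightarrow> a <# H \<in> lcosets H"
  unfolding LCOSETS_def by blast

lemma subgroup_in_lcosets:
  assumes "subgroup H G" shows "H \<in> lcosets H"
  using lcos_in_lcosets[OF one_closed, of H] lcos_mult_one[OF subgroup.subset[OF assms]] by simp

lemma lcos_eq_iff_inv_mult_mem:
  assumes H: "subgroup H G" and a: "a \<in> carrier G" and b: "b \<in> carrier G"
  shows "a <# H = b <# H \<longleftrightarrow> inv a \<otimes> b \<in> H"
proof
  assume "a <# H = b <# H"
  then have "b \<in> a <# H" using lcos_self[OF b H] by simp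
  then show "inv a \<otimes> b \<in> H" using subgroup.lcos_module_imp[OF H is_group a] by blast
next
  assume "inv a \<otimes> b \<in> H"
  then have "b \<in> a <# H" by (rule subgroup.lcos_module_rev[OF H is_group a b])
  then show "a <# H = b <# H" using l_repr_independence H a by blast
qed

lemma lcos_eq_subgroup_iff:
  assumes H: "subgroup H G" and a: "a \<in> carrier G"
  shows "a <# H = H \<longleftrightarrow> a \<in> H"
  using lcos_eq_iff_inv_mult_mem[OF H a one_closed] lcos_mult_one[OF subgroup.subset[OF H]]
    subgroup.m_inv_closed[OF H] a by fastforce

lemma lcos_mult_left_cancel:
  assumes H: "subgroup H G" and "g \<in> carrier G" "a \<in> carrier G" "b \<in> carrier G"
  shows "(g \<otimes> a) <# H = (g \<otimes> b) <# H \<longleftrightarrow> a <# H = b <# H"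
  using assms by (simp add: lcos_eq_iff_inv_mult_mem[OF H] inv_mult_group m_assoc[symmetric])
    (simp add: m_assoc)

lemma lcos_action_inv_cancel:
  assumes "subgroup H G" "g \<in> carrier G" "X \<in> lcosets H"
  shows "inv g <# (g <# X) = X"
  using assms unfolding LCOSETS_def
  by (auto simp: lcos_m_assoc[OF subgroup.subset] m_assoc[symmetric])

end

locale invariant_coset_matroid = group +
  fixes H :: "'a set" and I :: "'a set set set"
  assumes subgroup: "subgroup H G"
    and matroid: "matroid (lcosets H) I"
    and simple: "msimple (lcosets H) I"
    and invariant: "G_invariant_matroid G H I"
begin

lemma image_indep:
  assumes g: "g \<in> carrier G" and "X \<in> I"
  shows "(\<lambda>C. g <# C) ` X \<in> I"
proof -
  obtain B where B: "mbasis (lcosets H) I B" "X \<subseteq> B"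
    using matroid_indep_subset_mbasis[OF matroid \<open>X \<in> I\<close>] by blast
  then have "(\<lambda>C. g <# C) ` B \<in> I"
    using invariant g unfolding G_invariant_matroid_def mbasis_def by blast
  then show ?thesis
    using matroid_indep_subset[OF matroid] B(2) by blast
qed

lemma image_indep_iff:
  assumes g: "g \<in> carrier G" and X: "X \<subseteq> lcosets H"
  shows "(\<lambda>C. g <# C) ` X \<in> I \<longleftrightarrow> X \<in> I"
proof
  assume "(\<lambda>C. g <# C) ` X \<in> I"
  then have "(\<lambda>C. inv g <# C) ` (\<lambda>C. g <# C) ` X \<in> I"
    using image_indep g by simp
  moreover have "(\<lambda>C. inv g <# C) ` (\<lambda>C. g <# C) ` X = X"
    using lcos_action_inv_cancel[OF subgroup g] X by (force simp: image_image)
  ultimately show "X \<in> I" by simp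
qed (rule image_indep[OF g])

lemma lcos_triple_indep_iff:
  assumes "g \<in> carrier G" "a \<in> carrier G" "b \<in> carrier G" "c \<in> carrier G"
  shows "{(g \<otimes> a) <# H, (g \<otimes> b) <# H, (g \<otimes> c) <# H} \<in> I \<longleftrightarrow> {a <# H, b <# H, c <# H} \<in> I"
  using image_indep_iff[OF assms(1), of "{a <# H, b <# H, c <# H}"] assms lcos_in_lcosets
  by (simp add: lcos_m_assoc[OF subgroup.subset[OF subgroup]])

lemma one_lcos [simp]: "\<one> <# H = H"
  using lcos_mult_one[OF subgroup.subset[OF subgroup]] .

lemma coset_sim_iff:
  "(x, y) \<in> coset_sim G H I \<longleftrightarrow>
     x \<in> lcosets H - {H} \<and> y \<in> lcosets H - {H} \<and> (x = y \<or> {H, x, y} \<notin> I)"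
  unfolding coset_sim_def mdependent_def using subgroup_in_lcosets[OF subgroup] by auto

lemma coset_sim_distinct_iff:
  assumes "x \<noteq> y"
  shows "(x, y) \<in> coset_sim G H I \<longleftrightarrow> x \<in> lcosets H \<and> y \<in> lcosets H \<and> {H, x, y} \<notin> I"
  using assms msimple_dependent_triple_distinct[OF matroid simple, of H x y]
    subgroup_in_lcosets[OF subgroup] unfolding coset_sim_iff by blast

lemma dependent_triple_coset_sim:
  assumes "x \<in> lcosets H" "y \<in> lcosets H" "{H, x, y} \<notin> I"
  shows "(x, y) \<in> coset_sim G H I"
  using assms msimple_dependent_triple_distinct[OF matroid simple, of H x y]
    subgroup_in_lcosets[OF subgroup] unfolding coset_sim_iff by blast

lemma coset_sim_equiv: "equiv (lcosets H - {H}) (coset_sim G H I)"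
proof (rule equivI)
  show "coset_sim G H I \<subseteq> (lcosets H - {H}) \<times> (lcosets H - {H})"
    unfolding coset_sim_def by blast
  show "refl_on (lcosets H - {H}) (coset_sim G H I)"
    unfolding refl_on_def coset_sim_def by blast
  show "sym (coset_sim G H I)"
    unfolding sym_def coset_sim_iff by (auto simp: insert_commute)
  show "trans (coset_sim G H I)"
  proof (rule transI)
    fix x y z assume xy: "(x, y) \<in> coset_sim G H I" and yz: "(y, z) \<in> coset_sim G H I"
    then have domain: "x \<in> lcosets H - {H}" "z \<in> lcosets H - {H}"
      unfolding coset_sim_iff by blast+
    show "(x, z) \<in> coset_sim G H I"
    proof (cases "x = y \<or> y = z \<or> x = z")
      case True
      then consider "x = y" | "y = z" | "x = z" by blast
      then show ?thesis
      proof cases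
        case 3
        then show ?thesis using domain unfolding coset_sim_iff by simp
      qed (use xy yz in simp_all)
    next
      case False
      then have dependent: "{H, x, y} \<notin> I" "{H, y, z} \<notin> I"
        using xy yz coset_sim_distinct_iff by blast+
      have points: "{H, x, y, z} \<subseteq> lcosets H"
        using xy yz subgroup_in_lcosets[OF subgroup] unfolding coset_sim_iff by blast
      have "x \<noteq> z"
        using False by blast
      then have "{H, x, z} \<notin> I"
        by (rule msimple_dependent_triple_trans[OF matroid simple points dependent])
      then show ?thesis
        using domain unfolding coset_sim_iff by blast
    qed
  qed
qed

lemma coset_sim_inv_mult:
  assumes a: "a \<in> carrier G" and b: "b \<in> carrier G"
    and ab: "(a <# H, b <# H) \<in> coset_sim G H I" and "a <# H \<noteq> b <# H"
  shows "(inv a <# H, (inv a \<otimes> b) <# H) \<in> coset_sim G H I"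
proof -
  have "{\<one> <# H, a <# H, b <# H} \<notin> I"
    using ab \<open>a <# H \<noteq> b <# H\<close> coset_sim_distinct_iff by simp
  then have "{inv a <# H, H, (inv a \<otimes> b) <# H} \<notin> I"
    using lcos_triple_indep_iff[of "inv a" \<one> a b] a b by simp
  then show ?thesis
    using dependent_triple_coset_sim lcos_in_lcosets a b by (simp add: insert_commute)
qed

lemma coset_sim_stabilizer_mult:
  assumes h: "h \<in> H" and a: "a \<in> carrier G - H" and b: "b \<in> carrier G - H"
    and ab: "(a <# H, b <# H) \<in> coset_sim G H I"
  shows "((h \<otimes> a) <# H, (h \<otimes> b) <# H) \<in> coset_sim G H I"
proof -
  have hG: "h \<in> carrier G"
    using subgroup.mem_carrier[OF subgroup h] .
  show ?thesis
  proof (cases "a <# H = b <# H")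
    case True
    have "h \<otimes> a \<notin> H"
    proof
      assume "h \<otimes> a \<in> H"
      then have "inv h \<otimes> (h \<otimes> a) \<in> H"
        using subgroup.m_closed[OF subgroup subgroup.m_inv_closed[OF subgroup h]] by blast
      with hG a show False by (simp add: m_assoc[symmetric])
    qed
    then have "(h \<otimes> a) <# H \<in> lcosets H - {H}"
      using lcos_eq_subgroup_iff[OF subgroup] lcos_in_lcosets hG a by simp
    moreover have "(h \<otimes> a) <# H = (h \<otimes> b) <# H"
      using True lcos_mult_left_cancel[OF subgroup hG] a b by simp
    ultimately show ?thesis
      unfolding coset_sim_iff by simp
  next
    case False
    have "{\<one> <# H, a <# H, b <# H} \<notin> I"
      using ab False coset_sim_distinct_iff by simp
    moreover have "h <# H = H"
      using lcos_eq_subgroup_iff[OF subgroup hG] h by blast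
    ultimately have "{H, (h \<otimes> a) <# H, (h \<otimes> b) <# H} \<notin> I"
      using lcos_triple_indep_iff[of h \<one> a b] hG a b by simp
    then show ?thesis
      using dependent_triple_coset_sim lcos_in_lcosets hG a b by simp
  qed
qed

lemma lcos_triple_indep_iff_not_coset_sim:
  assumes a: "a \<in> carrier G" and b: "b \<in> carrier G" and c: "c \<in> carrier G"
    and bc: "b <# H \<noteq> c <# H"
  shows "{a <# H, b <# H, c <# H} \<in> I \<longleftrightarrow>
    ((inv a \<otimes> b) <# H, (inv a \<otimes> c) <# H) \<notin> coset_sim G H I"
proof -
  have "(inv a \<otimes> b) <# H \<noteq> (inv a \<otimes> c) <# H"
    using bc lcos_mult_left_cancel[OF subgroup] a b c by simp
  then have "((inv a \<otimes> b) <# H, (inv a \<otimes> c) <# H) \<in> coset_sim G H I \<longleftrightarrow>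
      {H, (inv a \<otimes> b) <# H, (inv a \<otimes> c) <# H} \<notin> I"
    using coset_sim_distinct_iff lcos_in_lcosets a b c by simp
  also have "\<dots> \<longleftrightarrow> {a <# H, b <# H, c <# H} \<notin> I"
    using lcos_triple_indep_iff[of "inv a" a b c] a b c by simp
  finally show ?thesis by blast
qed

lemma mbasis_eq_lcos_triples:
  assumes rank: "mrank (lcosets H) I = 3"
  shows "{B. mbasis (lcosets H) I B} =
    {{a <# H, b <# H, c <# H} | a b c.
       a \<in> carrier G \<and> b \<in> carrier G \<and> c \<in> carrier G \<and>
       a <# H \<noteq> b <# H \<and> a <# H \<noteq> c <# H \<and> b <# H \<noteq> c <# H \<and>
       ((inv a \<otimes> b) <# H, (inv a \<otimes> c) <# H) \<notin> coset_sim G H I}" (is "?bases = ?triples")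
proof
  show "?bases \<subseteq> ?triples"
  proof
    fix B assume "B \<in> ?bases"
    then have B: "B \<in> I" "card B = 3"
      using mbasis_iff_card_mrank[OF matroid] rank by auto
    then obtain x y z where xyz: "B = {x, y, z}" "x \<noteq> y" "y \<noteq> z" "x \<noteq> z"
      unfolding card_3_iff by blast
    moreover have "{x, y, z} \<subseteq> lcosets H"
      using matroid_indep_subset_ground[OF matroid] B xyz by blast
    ultimately obtain a b c where "a \<in> carrier G" "b \<in> carrier G" "c \<in> carrier G"
      and "B = {a <# H, b <# H, c <# H}"
      and "a <# H \<noteq> b <# H" "a <# H \<noteq> c <# H" "b <# H \<noteq> c <# H"
      unfolding LCOSETS_def by auto
    with B show "B \<in> ?triples"
      using lcos_triple_indep_iff_not_coset_sim by blast
  qed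
  show "?triples \<subseteq> ?bases"
  proof
    fix B assume "B \<in> ?triples"
    then obtain a b c where "a \<in> carrier G" "b \<in> carrier G" "c \<in> carrier G"
      and B: "B = {a <# H, b <# H, c <# H}"
      and distinct: "a <# H \<noteq> b <# H" "a <# H \<noteq> c <# H" "b <# H \<noteq> c <# H"
      and "((inv a \<otimes> b) <# H, (inv a \<otimes> c) <# H) \<notin> coset_sim G H I"
      by blast
    then have "B \<in> I"
      using lcos_triple_indep_iff_not_coset_sim by blast
    moreover have "card B = 3"
      using B distinct by simp
    ultimately show "B \<in> ?bases"
      using mbasis_iff_card_mrank[OF matroid] rank by simp
  qed
qed

lemma coset_sim_nontrivial:
  assumes rank: "mrank (lcosets H) I = 3"
  shows "card ((lcosets H - {H}) // coset_sim G H I) \<ge> 2"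
proof -
  obtain B where "mbasis (lcosets H) I B"
    using matroid_indep_subset_mbasis[OF matroid matroid_empty_indep[OF matroid]] by blast
  then have "B \<in> {B. mbasis (lcosets H) I B}" by simp
  then obtain a b c where a: "a \<in> carrier G" and b: "b \<in> carrier G" and c: "c \<in> carrier G"
    and "a <# H \<noteq> b <# H" "a <# H \<noteq> c <# H"
    and unrelated: "((inv a \<otimes> b) <# H, (inv a \<otimes> c) <# H) \<notin> coset_sim G H I"
    unfolding mbasis_eq_lcos_triples[OF rank] by blast
  define x y where "x = (inv a \<otimes> b) <# H" and "y = (inv a \<otimes> c) <# H"
  have "inv a \<otimes> b \<notin> H" "inv a \<otimes> c \<notin> H"
    using lcos_eq_iff_inv_mult_mem[OF subgroup a] b c \<open>a <# H \<noteq> b <# H\<close> \<open>a <# H \<noteq> c <# H\<close>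
    by simp_all
  then have domain: "x \<in> lcosets H - {H}" "y \<in> lcosets H - {H}"
    unfolding x_def y_def using lcos_eq_subgroup_iff[OF subgroup] lcos_in_lcosets a b c by simp_all
  let ?classes = "(lcosets H - {H}) // coset_sim G H I"
  have "finite ?classes"
    using finite_quotient[OF _ equiv_type[OF coset_sim_equiv]] matroid_finite_ground[OF matroid]
    by simp
  moreover have "{coset_sim G H I `` {x}, coset_sim G H I `` {y}} \<subseteq> ?classes"
    using domain by (simp add: quotientI)
  moreover have "coset_sim G H I `` {x} \<noteq> coset_sim G H I `` {y}"
    using eq_equiv_class_iff[OF coset_sim_equiv domain] unrelated unfolding x_def y_def by simp
  ultimately show ?thesis
    by (metis card_2_iff card_mono)
qed

end

theorem lemma3p6:
  fixes G :: "('a, 'b) monoid_scheme" and H :: "'a set" and I :: "'a set set set"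
  assumes "group G" and "finite (carrier G)"
    and "subgroup H G" and "H \<noteq> carrier G"
    and "card (lcosets\<^bsub>G\<^esub> H) \<ge> 3"
    and "matroid (lcosets\<^bsub>G\<^esub> H) I"
    and "msimple (lcosets\<^bsub>G\<^esub> H) I"
    and "mrank (lcosets\<^bsub>G\<^esub> H) I = 3"
    and "G_invariant_matroid G H I"
  shows "(equiv (lcosets\<^bsub>G\<^esub> H - {H}) (coset_sim G H I)
         \<and> card ((lcosets\<^bsub>G\<^esub> H - {H}) // coset_sim G H I) \<ge> 2)
    \<and> (\<forall>a\<in>carrier G. \<forall>b\<in>carrier G.
           (a <#\<^bsub>G\<^esub> H, b <#\<^bsub>G\<^esub> H) \<in> coset_sim G H I \<and> a <#\<^bsub>G\<^esub> H \<noteq> b <#\<^bsub>G\<^esub> H \<longrightarrow>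
           (inv\<^bsub>G\<^esub> a <#\<^bsub>G\<^esub> H, (inv\<^bsub>G\<^esub> a \<otimes>\<^bsub>G\<^esub> b) <#\<^bsub>G\<^esub> H) \<in> coset_sim G H I)
    \<and> (\<forall>h\<in>H. \<forall>a\<in>carrier G - H. \<forall>b\<in>carrier G - H.
           (a <#\<^bsub>G\<^esub> H, b <#\<^bsub>G\<^esub> H) \<in> coset_sim G H I \<longrightarrow>
           ((h \<otimes>\<^bsub>G\<^esub> a) <#\<^bsub>G\<^esub> H, (h \<otimes>\<^bsub>G\<^esub> b) <#\<^bsub>G\<^esub> H) \<in> coset_sim G H I)
    \<and> ({B. mbasis (lcosets\<^bsub>G\<^esub> H) I B} =
         {{a <#\<^bsub>G\<^esub> H, b <#\<^bsub>G\<^esub> H, c <#\<^bsub>G\<^esub> H} | a b c.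
            a \<in> carrier G \<and> b \<in> carrier G \<and> c \<in> carrier G \<and>
            a <#\<^bsub>G\<^esub> H \<noteq> b <#\<^bsub>G\<^esub> H \<and> a <#\<^bsub>G\<^esub> H \<noteq> c <#\<^bsub>G\<^esub> H \<and> b <#\<^bsub>G\<^esub> H \<noteq> c <#\<^bsub>G\<^esub> H \<and>
            ((inv\<^bsub>G\<^esub> a \<otimes>\<^bsub>G\<^esub> b) <#\<^bsub>G\<^esub> H, (inv\<^bsub>G\<^esub> a \<otimes>\<^bsub>G\<^esub> c) <#\<^bsub>G\<^esub> H) \<notin> coset_sim G H I})"
proof -
  interpret invariant_coset_matroid G H I
    using assms by (simp add: invariant_coset_matroid_def invariant_coset_matroid_axioms_def)
  show ?thesis
    by (intro conjI ballI impI coset_sim_equiv coset_sim_nontrivial[OF assms(8)]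
        mbasis_eq_lcos_triples[OF assms(8)] coset_sim_stabilizer_mult)
      (auto intro: coset_sim_inv_mult)
qed

end
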